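(* Let $T>0$, $I=[0,T]$. Let $\Phi:\mathbb{R}\to\mathbb{R}$ be a strictly increasing homeomorphism; $a\in C(I\times\mathbb{R},\mathbb{R})$ with $a(t,x)\ge h(t)$ for all $(t,x)\in I\times\mathbb{R}$, where $h\in C(I,\mathbb{R})$, $h\ge0$ and $1/h\in L^p(I)$ for some $p>1$; $f:I\times\mathbb{R}^2\to\mathbb{R}$ Carathéodory, and assume that for every $R>0$ and every non-negative $\gamma\in L^p(I)$ there is a non-negative $h_{R,\gamma}\in L^p(I)$ with $|f(t,x,y(t))|\le h_{R,\gamma}(t)$ for a.e. $t\in I$, every $|x|\le R$ and every $y\in L^p(I)$ with $|y|\le\gamma$ a.e. For every $n\in\mathbb{N}$ let $x_n\in W^{1,p}(I)$ be a solution of $(\Phi(a(t,x(t))x'(t)))'=f(t,x(t),x'(t))$ a.e. on $I$, and suppose there exist $M,L>0$ with $\sup_I|x_n|\le M$ and $\sup_I|\mathcal{A}_{x_n}|\le L$ for every $n$. Then there exist a subsequence $\{x_{n_k}\}_k$ and a solution $x_0\in W^{1,p}(I)$ of the same equation such that $x_{n_k}(t)\to x_0(t)$ and $\mathcal{A}_{x_{n_k}}(t)\to\mathcal{A}_{x_0}(t)$ for every $t\in I$ as $k\to\infty$.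
   Context: A continuous $x$ is a solution of the equation if $x\in W^{1,1}(I)$, $t\mapsto\Phi(a(t,x(t))x'(t))\in W^{1,1}(I)$ and its derivative equals $f(t,x(t),x'(t))$ a.e. For such $x$, $\mathcal{A}_x$ is the unique continuous function on $I$ equal to $a(t,x(t))x'(t)$ a.e. Carathéodory: measurable in $t$ for every $(x,y)$, continuous in $(x,y)$ for a.e. $t$. *)

theory Defs
  imports "HOL-Analysis.Analysis"
begin

definition Lp_on :: "real \<Rightarrow> real \<Rightarrow> (real \<Rightarrow> real) \<Rightarrow> bool" where
  "Lp_on T p g \<longleftrightarrow> set_borel_measurable lborel {0..T} g
     \<and> set_integrable lborel {0..T} (\<lambda>t. \<bar>g t\<bar> powr p)"

text \<open>A continuous function x on I belongs to W^{1,1}(I) with (weak/a.e.) derivative x':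
  x' is Lebesgue integrable on I and x is its indefinite integral (absolute continuity).\<close>
definition W11_with_deriv :: "real \<Rightarrow> (real \<Rightarrow> real) \<Rightarrow> (real \<Rightarrow> real) \<Rightarrow> bool" where
  "W11_with_deriv T x x' \<longleftrightarrow> set_integrable lborel {0..T} x'
     \<and> (\<forall>t\<in>{0..T}. x t = x 0 + (LINT s:{0..t}|lborel. x' s))"

definition is_solution ::
  "real \<Rightarrow> (real \<Rightarrow> real) \<Rightarrow> (real \<Rightarrow> real \<Rightarrow> real) \<Rightarrow> (real \<Rightarrow> real \<Rightarrow> real \<Rightarrow> real)
     \<Rightarrow> (real \<Rightarrow> real) \<Rightarrow> (real \<Rightarrow> real) \<Rightarrow> bool" where
  "is_solution T \<Phi> a f x x' \<longleftrightarrow> W11_with_deriv T x x'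
     \<and> (\<exists>u u'. W11_with_deriv T u u'
          \<and> (AE t in lborel. t \<in> {0..T} \<longrightarrow> u t = \<Phi> (a t (x t) * x' t))
          \<and> (AE t in lborel. t \<in> {0..T} \<longrightarrow> u' t = f t (x t) (x' t)))"

text \<open>A is the (unique) continuous function on I equal to a(t,x(t)) x'(t) a.e., i.e. A = \<A>_x on I.\<close>
definition is_A_of :: "real \<Rightarrow> (real \<Rightarrow> real \<Rightarrow> real) \<Rightarrow> (real \<Rightarrow> real) \<Rightarrow> (real \<Rightarrow> real)
     \<Rightarrow> (real \<Rightarrow> real) \<Rightarrow> bool" where
  "is_A_of T a x x' A \<longleftrightarrow> continuous_on {0..T} A
     \<and> (AE t in lborel. t \<in> {0..T} \<longrightarrow> A t = a t (x t) * x' t)"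

definition caratheodory :: "real \<Rightarrow> (real \<Rightarrow> real \<Rightarrow> real \<Rightarrow> real) \<Rightarrow> bool" where
  "caratheodory T f \<longleftrightarrow>
     (\<forall>x y. set_borel_measurable lborel {0..T} (\<lambda>t. f t x y))
     \<and> (AE t in lborel. t \<in> {0..T} \<longrightarrow> continuous_on UNIV (\<lambda>(x, y). f t x y))"

end

theory Submission
  imports Defs "HOL-Complex_Analysis.Great_Picard"
begin

text \<open>
  Since \<open>h \<le> a\<close> and \<open>|\<A>\<^sub>n| \<le> L\<close>, the derivatives satisfy \<open>|x\<^sub>n'| \<le> L / h\<close>, a fixed \<open>L\<^sup>p\<close>
  function; the growth condition on \<open>f\<close> then gives a common \<open>L\<^sup>p\<close> (hence \<open>L\<^sup>1\<close>) bound \<open>w\<close>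
  for the derivatives \<open>f(t, x\<^sub>n, x\<^sub>n')\<close> of the fluxes \<open>\<Phi>(\<A>\<^sub>n)\<close>. Thus \<open>x\<^sub>n\<close> and \<open>\<Phi>(\<A>\<^sub>n)\<close>
  are uniformly bounded with the common moduli of continuity \<open>t \<mapsto> \<integral>\<^sub>0\<^sup>t L / h\<close>
  and \<open>t \<mapsto> \<integral>\<^sub>0\<^sup>t w\<close>, and Arzela-Ascoli gives a subsequence along which
  \<open>x\<^sub>n \<rightarrow> x\<^sub>0\<close> and \<open>\<Phi>(\<A>\<^sub>n) \<rightarrow> V\<close>, so \<open>\<A>\<^sub>n \<rightarrow> \<A>\<^sub>0 := \<Phi>\<^sup>-\<^sup>1(V)\<close>. Then
  \<open>x\<^sub>n' = \<A>\<^sub>n / a(t, x\<^sub>n) \<rightarrow> \<A>\<^sub>0 / a(t, x\<^sub>0)\<close> a.e., \<open>f(t, x\<^sub>n, x\<^sub>n')\<close> converges a.e. by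
  the Caratheodory condition, and dominated convergence passes to the limit in
  \<open>x\<^sub>n(t) = x\<^sub>n(0) + \<integral>\<^sub>0\<^sup>t x\<^sub>n'\<close> and \<open>\<Phi>(\<A>\<^sub>n(t)) = \<Phi>(\<A>\<^sub>n(0)) + \<integral>\<^sub>0\<^sup>t f(s, x\<^sub>n, x\<^sub>n')\<close>.
\<close>

lemma abs_le_one_plus_abs_powr:
  fixes y p :: real
  assumes "p \<ge> 1"
  shows "\<bar>y\<bar> \<le> 1 + \<bar>y\<bar> powr p"
proof (cases "\<bar>y\<bar> \<le> 1")
  case False
  then have "\<bar>y\<bar> powr 1 \<le> \<bar>y\<bar> powr p" by (intro powr_mono assms) auto
  then show ?thesis using False by simp
qed (smt (verit) powr_ge_zero)

lemma AE_on_interval_dense: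
  fixes a b t0 d :: real
  assumes "AE t\<in>{a..b} in lborel. P t" "a < b" "t0 \<in> {a..b}" "d > 0"
  shows "\<exists>t\<in>{a..b}. \<bar>t - t0\<bar> < d \<and> P t"
proof (rule ccontr)
  assume none: "\<not> ?thesis"
  define c e where "c = max a (t0 - d/2)" and "e = min b (t0 + d/2)"
  have "c < e" using assms unfolding c_def e_def by auto
  have "t \<in> {a..b} \<and> \<bar>t - t0\<bar> < d" if "t \<in> {c..e}" for t
    using that assms(4) unfolding c_def e_def by auto
  then have "AE t in lborel. t \<notin> {c..e}"
    using assms(1) none by (auto elim!: eventually_mono)
  then have "emeasure lborel {c..e} = 0"
    by (subst (asm) AE_iff_measurable[of "{c..e}"]) auto
  with \<open>c < e\<close> show False by simp
qed

lemma continuous_on_interval_eq_if_AE_eq: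
  fixes f g :: "real \<Rightarrow> real"
  assumes "continuous_on {a..b} f" "continuous_on {a..b} g"
    and "AE t\<in>{a..b} in lborel. f t = g t" "a < b" "t0 \<in> {a..b}"
  shows "f t0 = g t0"
proof (rule ccontr)
  assume ne: "f t0 \<noteq> g t0"
  have "continuous_on {a..b} (\<lambda>t. f t - g t)" using assms by (intro continuous_intros)
  then obtain d where "d > 0" and
    d: "\<forall>t\<in>{a..b}. dist t t0 < d \<longrightarrow> dist (f t - g t) (f t0 - g t0) < \<bar>f t0 - g t0\<bar>"
    using assms(5) ne unfolding continuous_on_iff by (metis zero_less_abs_iff right_minus_eq)
  obtain t where "t \<in> {a..b}" "\<bar>t - t0\<bar> < d" "f t = g t"
    using AE_on_interval_dense[OF assms(3,4,5) \<open>d > 0\<close>] by blast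
  with d show False by (auto simp: dist_real_def)
qed

lemma common_modulus_pointwise_convergent_subseq:
  fixes F :: "nat \<Rightarrow> 'a::euclidean_space \<Rightarrow> real" and G :: "'a \<Rightarrow> real"
  assumes "compact S" "\<And>n t. t \<in> S \<Longrightarrow> \<bar>F n t\<bar> \<le> B" "continuous_on S G"
    and modulus: "\<And>n s t. s \<in> S \<Longrightarrow> t \<in> S \<Longrightarrow> \<bar>F n t - F n s\<bar> \<le> \<bar>G t - G s\<bar>"
  obtains r g where "strict_mono r" "continuous_on S g" "\<And>t. t \<in> S \<Longrightarrow> (\<lambda>n. F (r n) t) \<longlonglongrightarrow> g t"
proof -
  have "\<exists>d>0. \<forall>n s. s \<in> S \<and> norm (t - s) < d \<longrightarrow> norm (F n t - F n s) < e"
    if t: "t \<in> S" and e: "0 < e" for t e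
  proof -
    obtain d where "d > 0" "\<forall>s\<in>S. dist s t < d \<longrightarrow> dist (G s) (G t) < e"
      using assms(3) t e unfolding continuous_on_iff by blast
    moreover have "\<bar>F n t - F n s\<bar> \<le> \<bar>G s - G t\<bar>" if "s \<in> S" for n s
      using modulus[OF t that] by (simp add: abs_minus_commute)
    ultimately show ?thesis
      by (metis dist_real_def dist_norm norm_minus_commute order.strict_trans1 real_norm_def)
  qed
  note equicont = this
  have bounded: "norm (F n t) \<le> B" if "t \<in> S" for n t
    using assms(2) that by simp
  obtain g r where "continuous_on S g" "strict_mono (r :: nat \<Rightarrow> nat)"
      and unif: "\<And>e. 0 < e \<Longrightarrow> \<exists>N. \<forall>n t. n \<ge> N \<and> t \<in> S \<longrightarrow> norm (F (r n) t - g t) < e"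
    using Arzela_Ascoli[OF assms(1) bounded equicont] by blast
  moreover have "(\<lambda>n. F (r n) t) \<longlonglongrightarrow> g t" if "t \<in> S" for t
    using unif that by (intro LIMSEQ_I) blast
  ultimately show ?thesis using that by blast
qed

lemma set_integral_dominated_convergence:
  fixes s :: "nat \<Rightarrow> 'a \<Rightarrow> real"
  assumes "set_borel_measurable M S g" "\<And>k. set_borel_measurable M S (s k)"
    and "set_integrable M S w" "AE t\<in>S in M. (\<lambda>k. s k t) \<longlonglongrightarrow> g t"
    and "\<And>k. AE t\<in>S in M. \<bar>s k t\<bar> \<le> w t"
  shows "set_integrable M S g" "(\<lambda>k. LINT t:S|M. s k t) \<longlonglongrightarrow> (LINT t:S|M. g t)"
proof -
  have lim: "AE t in M. (\<lambda>k. indicator S t *\<^sub>R s k t) \<longlonglongrightarrow> indicator S t *\<^sub>R g t"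
    using assms(4) by eventually_elim (auto simp: indicator_def)
  have bd: "AE t in M. norm (indicator S t *\<^sub>R s k t) \<le> indicator S t *\<^sub>R w t" for k
    using assms(5)[of k] by eventually_elim (auto simp: indicator_def)
  note conv = assms(1-3)[unfolded set_borel_measurable_def set_integrable_def] lim bd
  show "set_integrable M S g"
    unfolding set_integrable_def using conv by (rule integrable_dominated_convergence)
  show "(\<lambda>k. LINT t:S|M. s k t) \<longlonglongrightarrow> (LINT t:S|M. g t)"
    unfolding set_lebesgue_integral_def using conv by (rule integral_dominated_convergence)
qed

lemma AE_tendsto_abs_le:
  fixes s :: "nat \<Rightarrow> 'a \<Rightarrow> real"
  assumes "AE t\<in>S in M. (\<lambda>n. s n t) \<longlonglongrightarrow> g t" "\<And>n. AE t\<in>S in M. \<bar>s n t\<bar> \<le> w t"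
  shows "AE t\<in>S in M. \<bar>g t\<bar> \<le> w t"
proof -
  have "AE t in M. \<forall>n. t \<in> S \<longrightarrow> \<bar>s n t\<bar> \<le> w t"
    by (subst AE_all_countable) (use assms(2) in blast)
  then show ?thesis
    using assms(1)
  proof eventually_elim
    case (elim t)
    show ?case
    proof
      assume t: "t \<in> S"
      have "(\<lambda>n. \<bar>s n t\<bar>) \<longlonglongrightarrow> \<bar>g t\<bar>"
        using elim t by (intro tendsto_rabs) simp
      then show "\<bar>g t\<bar> \<le> w t"
        by (rule LIMSEQ_le_const2) (use elim t in auto)
    qed
  qed
qed

section \<open>\<open>L\<^sup>p\<close> functions on an interval\<close>

lemma Lp_on_set_integrable:
  assumes "Lp_on T p g" "p \<ge> 1"
  shows "set_integrable lborel {0..T} g"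
proof -
  have "set_integrable lborel {0..T} (\<lambda>t. 1 + \<bar>g t\<bar> powr p)"
    using assms(1) borel_integrable_atLeastAtMost'[OF continuous_on_const[of _ "1::real"]]
    unfolding Lp_on_def by (intro set_integral_add(1)) auto
  then show ?thesis
    using assms abs_le_one_plus_abs_powr[OF assms(2)] unfolding Lp_on_def
    by (elim set_integrable_bound) (auto intro!: AE_I2 intro: order_trans)
qed

lemma Lp_on_cmult:
  assumes "Lp_on T p g"
  shows "Lp_on T p (\<lambda>t. c * g t)"
proof -
  have "(\<lambda>t. indicator {0..T} t *\<^sub>R g t) \<in> borel_measurable lborel"
    using assms unfolding Lp_on_def set_borel_measurable_def by simp
  then have "(\<lambda>t. c * (indicator {0..T} t *\<^sub>R g t)) \<in> borel_measurable lborel"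
    by (rule borel_measurable_times[OF borel_measurable_const])
  then have "set_borel_measurable lborel {0..T} (\<lambda>t. c * g t)"
    unfolding set_borel_measurable_def by (simp add: mult.left_commute)
  moreover have "\<bar>c * g t\<bar> powr p = \<bar>c\<bar> powr p * \<bar>g t\<bar> powr p" for t
    by (simp add: abs_mult powr_mult)
  ultimately show ?thesis
    using assms unfolding Lp_on_def by simp
qed

lemma Lp_on_dominated:
  assumes "Lp_on T p w" "p \<ge> 0" "set_borel_measurable lborel {0..T} g"
    and "AE t\<in>{0..T} in lborel. \<bar>g t\<bar> \<le> w t"
  shows "Lp_on T p g"
  unfolding Lp_on_def
proof
  have "(\<lambda>t. \<bar>indicator {0..T} t *\<^sub>R g t\<bar> powr p) \<in> borel_measurable lborel"
    using assms(3) unfolding set_borel_measurable_def by measurable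
  moreover have "\<bar>indicator {0..T} t *\<^sub>R g t\<bar> powr p = indicator {0..T} t *\<^sub>R \<bar>g t\<bar> powr p" for t
    by (simp add: indicator_def)
  ultimately show "set_integrable lborel {0..T} (\<lambda>t. \<bar>g t\<bar> powr p)"
    using assms unfolding Lp_on_def
    by (elim conjE set_integrable_bound)
       (auto simp: set_borel_measurable_def intro: powr_mono2 elim!: eventually_mono)
qed (use assms(3) in simp)

section \<open>Absolutely continuous functions\<close>

lemma W11_with_deriv_set_integrable:
  "W11_with_deriv T y y' \<Longrightarrow> S \<in> sets lborel \<Longrightarrow> S \<subseteq> {0..T} \<Longrightarrow> set_integrable lborel S y'"
  unfolding W11_with_deriv_def by (blast intro: set_integrable_subset)

lemma W11_with_deriv_set_borel_measurable:
  "W11_with_deriv T y y' \<Longrightarrow> set_borel_measurable lborel {0..T} y'"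
  using W11_with_deriv_set_integrable[of T y y' "{0..T}"]
  unfolding set_integrable_def set_borel_measurable_def by (simp add: borel_measurable_integrable)

lemma W11_with_deriv_integral:
  assumes "W11_with_deriv T y y'" "t \<in> {0..T}"
  shows "y t = y 0 + integral {0..t} y'" "y' integrable_on {0..t}"
proof -
  have "set_integrable lborel {0..t} y'"
    using assms by (intro W11_with_deriv_set_integrable) auto
  moreover have "y t = y 0 + (LINT s:{0..t}|lborel. y' s)"
    using assms unfolding W11_with_deriv_def by blast
  ultimately show "y t = y 0 + integral {0..t} y'" "y' integrable_on {0..t}"
    by (simp_all add: set_borel_integral_eq_integral)
qed

lemma W11_with_deriv_continuous:
  assumes "W11_with_deriv T y y'"
  shows "continuous_on {0..T} y"
proof -
  have "y' integrable_on {0..T}"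
    using W11_with_deriv_set_integrable[OF assms] by (simp add: set_borel_integral_eq_integral)
  then have "continuous_on {0..T} (\<lambda>t. y 0 + integral {0..t} y')"
    by (intro continuous_intros indefinite_integral_continuous_1)
  then show ?thesis
    by (rule continuous_on_eq) (use W11_with_deriv_integral(1)[OF assms, symmetric] in simp)
qed

lemma W11_with_deriv_cong:
  assumes "W11_with_deriv T y y'" "T \<ge> 0" "\<And>t. t \<in> {0..T} \<Longrightarrow> y t = z t"
  shows "W11_with_deriv T z y'"
  unfolding W11_with_deriv_def
proof (intro conjI ballI)
  show "set_integrable lborel {0..T} y'"
    using W11_with_deriv_set_integrable[OF assms(1)] by simp
  fix t assume t: "t \<in> {0..T}"
  have "y t = y 0 + (LINT s:{0..t}|lborel. y' s)"
    using assms(1) t unfolding W11_with_deriv_def by blast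
  then show "z t = z 0 + (LINT s:{0..t}|lborel. y' s)"
    using assms(2) assms(3)[OF t] assms(3)[of 0] by simp
qed

lemma W11_with_deriv_diff_le:
  assumes W: "W11_with_deriv T y y'" and g: "set_integrable lborel {0..T} g"
    and bd: "AE t\<in>{0..T} in lborel. \<bar>y' t\<bar> \<le> g t"
    and st: "s \<in> {0..T}" "t \<in> {0..T}" "s \<le> t"
  shows "\<bar>y t - y s\<bar> \<le> integral {0..t} g - integral {0..s} g"
proof -
  have y'_st: "set_integrable lborel {s..t} y'" and g_st: "set_integrable lborel {s..t} g"
    using W g st by (auto intro: W11_with_deriv_set_integrable set_integrable_subset)
  have "set_integrable lborel {0..t} g"
    using g st by (auto intro: set_integrable_subset)
  then have "y' integrable_on {0..t}" "g integrable_on {0..t}"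
    using W11_with_deriv_integral(2)[OF W st(2)] by (simp_all add: set_borel_integral_eq_integral)
  then have split: "integral {0..t} y' = integral {0..s} y' + integral {s..t} y'"
    "integral {0..t} g = integral {0..s} g + integral {s..t} g"
    using st by (simp_all add: Henstock_Kurzweil_Integration.integral_combine)
  have "y t - y s = (LINT r:{s..t}|lborel. y' r)"
    using W11_with_deriv_integral(1)[OF W st(1)] W11_with_deriv_integral(1)[OF W st(2)] split(1)
      set_borel_integral_eq_integral(2)[OF y'_st] by simp
  also have "\<bar>\<dots>\<bar> \<le> (LINT r:{s..t}|lborel. \<bar>y' r\<bar>)"
    using set_integral_norm_bound[OF y'_st] by simp
  also have "\<dots> \<le> (LINT r:{s..t}|lborel. g r)"
    using bd st by (intro set_integral_mono_AE set_integrable_abs y'_st g_st)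
      (auto elim!: eventually_mono)
  also have "\<dots> = integral {0..t} g - integral {0..s} g"
    using split(2) set_borel_integral_eq_integral(2)[OF g_st] by simp
  finally show ?thesis .
qed

lemma W11_with_deriv_modulus:
  assumes "W11_with_deriv T y y'" "set_integrable lborel {0..T} g"
    and "AE t\<in>{0..T} in lborel. \<bar>y' t\<bar> \<le> g t" "s \<in> {0..T}" "t \<in> {0..T}"
  shows "\<bar>y t - y s\<bar> \<le> \<bar>integral {0..t} g - integral {0..s} g\<bar>"
proof (cases "s \<le> t")
  case True
  then show ?thesis using W11_with_deriv_diff_le[OF assms(1-3) assms(4,5)] by linarith
next
  case False
  then show ?thesis using W11_with_deriv_diff_le[OF assms(1-3) assms(5,4)] by linarith
qed

lemma W11_with_deriv_pointwise_convergent_subseq: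
  fixes y y' :: "nat \<Rightarrow> real \<Rightarrow> real"
  assumes "\<And>n. W11_with_deriv T (y n) (y' n)" "\<And>n t. t \<in> {0..T} \<Longrightarrow> \<bar>y n t\<bar> \<le> B"
    and "set_integrable lborel {0..T} w" "\<And>n. AE t\<in>{0..T} in lborel. \<bar>y' n t\<bar> \<le> w t"
  obtains r Y where "strict_mono r" "continuous_on {0..T} Y"
    "\<And>t. t \<in> {0..T} \<Longrightarrow> (\<lambda>k. y (r k) t) \<longlonglongrightarrow> Y t"
proof (rule common_modulus_pointwise_convergent_subseq[of "{0..T}" y B "\<lambda>t. integral {0..t} w"])
  show "continuous_on {0..T} (\<lambda>t. integral {0..t} w)"
    using assms(3) by (intro indefinite_integral_continuous_1) (simp add: set_borel_integral_eq_integral)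
  show "\<bar>y n t - y n s\<bar> \<le> \<bar>integral {0..t} w - integral {0..s} w\<bar>"
    if "s \<in> {0..T}" "t \<in> {0..T}" for n s t
    using W11_with_deriv_modulus[OF assms(1,3,4) that] .
qed (use assms(2) that in auto)

lemma W11_with_deriv_limit:
  fixes y y' :: "nat \<Rightarrow> real \<Rightarrow> real"
  assumes W: "\<And>n. W11_with_deriv T (y n) (y' n)"
    and conv: "\<And>t. t \<in> {0..T} \<Longrightarrow> (\<lambda>n. y n t) \<longlonglongrightarrow> Y t"
    and conv': "AE t\<in>{0..T} in lborel. convergent (\<lambda>n. y' n t)"
    and w: "set_integrable lborel {0..T} w"
    and dom: "\<And>n. AE t\<in>{0..T} in lborel. \<bar>y' n t\<bar> \<le> w t"
  shows "W11_with_deriv T Y (\<lambda>t. lim (\<lambda>n. y' n t))"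
proof -
  \<comment> \<open>\<open>lim\<close> is unspecified where \<open>y' n t\<close> diverges, but that happens only on a null set.\<close>
  define g where "g t = lim (\<lambda>n. y' n t)" for t
  have y'_meas: "set_borel_measurable lborel {0..T} (y' n)" for n
    by (rule W11_with_deriv_set_borel_measurable[OF W])
  have "indicator {0..T} t *\<^sub>R g t = lim (\<lambda>n. indicator {0..T} t *\<^sub>R y' n t)" for t
    by (cases "t \<in> {0..T}") (simp_all add: g_def limI[OF tendsto_const])
  then have g_meas: "set_borel_measurable lborel {0..T} g"
    using y'_meas unfolding set_borel_measurable_def by (simp add: borel_measurable_lim_metric)
  have g_lim: "AE t\<in>{0..T} in lborel. (\<lambda>n. y' n t) \<longlonglongrightarrow> g t"
    using conv' by (auto simp: g_def convergent_LIMSEQ_iff elim!: eventually_mono)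
  have dom_conv: "set_integrable lborel S g \<and> (\<lambda>n. LINT s:S|lborel. y' n s) \<longlonglongrightarrow> (LINT s:S|lborel. g s)"
    if "S \<subseteq> {0..T}" "S \<in> sets lborel" for S
  proof -
    have "AE t\<in>S in lborel. (\<lambda>n. y' n t) \<longlonglongrightarrow> g t"
      using g_lim that(1) by (auto elim!: eventually_mono)
    moreover have "AE t\<in>S in lborel. \<bar>y' n t\<bar> \<le> w t" for n
      using dom[of n] that(1) by (auto elim!: eventually_mono)
    ultimately show ?thesis
      using set_integral_dominated_convergence[of lborel S g y' w]
        set_borel_measurable_subset[OF g_meas that(2,1)] set_borel_measurable_subset[OF y'_meas that(2,1)]
        set_integrable_subset[OF w that(2,1)] by blast
  qed
  show ?thesis
    unfolding W11_with_deriv_def g_def[symmetric]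
  proof
    show "set_integrable lborel {0..T} g" using dom_conv[of "{0..T}"] by simp
    show "\<forall>t\<in>{0..T}. Y t = Y 0 + (LINT s:{0..t}|lborel. g s)"
    proof
      fix t assume t: "t \<in> {0..T}"
      then have "(\<lambda>n. y n 0 + (LINT s:{0..t}|lborel. y' n s)) \<longlonglongrightarrow> Y 0 + (LINT s:{0..t}|lborel. g s)"
        using conv dom_conv[of "{0..t}"] by (intro tendsto_add) auto
      moreover have "y n t = y n 0 + (LINT s:{0..t}|lborel. y' n s)" for n
        using W[of n] t unfolding W11_with_deriv_def by blast
      ultimately show "Y t = Y 0 + (LINT s:{0..t}|lborel. g s)"
        using LIMSEQ_unique[OF conv[OF t]] by simp
    qed
  qed
qed

section \<open>Solutions\<close>

lemma solution_flux_W11: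
  assumes sol: "is_solution T \<Phi> a f x x'" and A: "is_A_of T a x x' A"
    and \<Phi>: "continuous_on UNIV \<Phi>" and T: "T > 0"
  obtains u' where "W11_with_deriv T (\<lambda>t. \<Phi> (A t)) u'"
    "AE t\<in>{0..T} in lborel. u' t = f t (x t) (x' t)"
proof -
  obtain u u' where u: "W11_with_deriv T u u'"
    and u_eq: "AE t\<in>{0..T} in lborel. u t = \<Phi> (a t (x t) * x' t)"
    and u': "AE t\<in>{0..T} in lborel. u' t = f t (x t) (x' t)"
    using sol unfolding is_solution_def by blast
  have A_eq: "AE t\<in>{0..T} in lborel. A t = a t (x t) * x' t" and A_cont: "continuous_on {0..T} A"
    using A unfolding is_A_of_def by auto
  have u_eq_flux: "u t = \<Phi> (A t)" if "t \<in> {0..T}" for t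
  proof (rule continuous_on_interval_eq_if_AE_eq[OF _ _ _ T that])
    show "continuous_on {0..T} u" by (rule W11_with_deriv_continuous[OF u])
    show "continuous_on {0..T} (\<lambda>t. \<Phi> (A t))"
      by (rule continuous_on_compose2[OF \<Phi> A_cont]) simp
    show "AE t\<in>{0..T} in lborel. u t = \<Phi> (A t)"
      using u_eq A_eq by eventually_elim simp
  qed
  show thesis
    using that W11_with_deriv_cong[OF u _ u_eq_flux] u' T by simp
qed

lemma is_A_of_deriv_bound:
  assumes "is_A_of T a x x' A" "\<And>t. t \<in> {0..T} \<Longrightarrow> \<bar>A t\<bar> \<le> L"
    and "\<And>t y. t \<in> {0..T} \<Longrightarrow> h t \<le> a t y" "AE t\<in>{0..T} in lborel. h t > 0"
  shows "AE t\<in>{0..T} in lborel. \<bar>x' t\<bar> \<le> L * (1 / h t)"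
proof -
  have bound: "\<bar>x' t\<bar> \<le> L * (1 / h t)"
    if t: "t \<in> {0..T}" and "h t > 0" "A t = a t (x t) * x' t" for t
  proof -
    have "\<bar>x' t\<bar> * h t \<le> \<bar>x' t\<bar> * a t (x t)"
      using assms(3)[OF t] by (simp add: mult_left_mono)
    also have "\<dots> = \<bar>A t\<bar>"
      using that assms(3)[OF t, of "x t"] by (simp add: abs_mult)
    finally show ?thesis
      using that assms(2)[OF t] by (simp add: pos_le_divide_eq)
  qed
  have "AE t\<in>{0..T} in lborel. A t = a t (x t) * x' t"
    using assms(1) unfolding is_A_of_def by simp
  then show ?thesis
    using assms(4) by eventually_elim (blast intro: bound)
qed

lemma caratheodory_tendsto:
  assumes "caratheodory T f" "\<And>t. t \<in> {0..T} \<Longrightarrow> (\<lambda>n. x n t) \<longlonglongrightarrow> X t"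
    and "AE t\<in>{0..T} in lborel. (\<lambda>n. y n t) \<longlonglongrightarrow> Y t"
  shows "AE t\<in>{0..T} in lborel. (\<lambda>n. f t (x n t) (y n t)) \<longlonglongrightarrow> f t (X t) (Y t)"
  using assms(3) assms(1)[unfolded caratheodory_def, THEN conjunct2]
proof eventually_elim
  case (elim t)
  show ?case
  proof
    assume t: "t \<in> {0..T}"
    have f_cont: "continuous_on UNIV (\<lambda>(y, z). f t y z)" using elim t by simp
    have "((\<lambda>n. (x n t, y n t)) \<longlongrightarrow> (X t, Y t)) sequentially"
      using elim t by (intro tendsto_Pair assms(2)) simp_all
    from continuous_on_tendsto_compose[OF f_cont this]
    show "(\<lambda>n. f t (x n t) (y n t)) \<longlonglongrightarrow> f t (X t) (Y t)" by simp
  qed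
qed

lemma is_A_of_deriv_tendsto:
  fixes x x' A :: "nat \<Rightarrow> real \<Rightarrow> real"
  assumes a: "continuous_on ({0..T} \<times> UNIV) (\<lambda>(t, y). a t y)"
    and a_pos: "AE t\<in>{0..T} in lborel. \<forall>y. a t y > 0"
    and A: "\<And>n. is_A_of T a (x n) (x' n) (A n)"
    and x_conv: "\<And>t. t \<in> {0..T} \<Longrightarrow> (\<lambda>n. x n t) \<longlonglongrightarrow> X t"
    and A_conv: "\<And>t. t \<in> {0..T} \<Longrightarrow> (\<lambda>n. A n t) \<longlonglongrightarrow> A0 t"
  shows "AE t\<in>{0..T} in lborel. (\<lambda>n. x' n t) \<longlonglongrightarrow> A0 t / a t (X t)"
proof -
  have A_eq: "AE t in lborel. \<forall>n. t \<in> {0..T} \<longrightarrow> A n t = a t (x n t) * x' n t"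
    by (subst AE_all_countable) (use A in \<open>simp add: is_A_of_def\<close>)
  have a_conv: "(\<lambda>n. a t (x n t)) \<longlonglongrightarrow> a t (X t)" if "t \<in> {0..T}" for t
  proof -
    have "((\<lambda>n. (\<lambda>(t, y). a t y) (t, x n t)) \<longlongrightarrow> (\<lambda>(t, y). a t y) (t, X t)) sequentially"
      by (rule continuous_on_tendsto_compose[OF a]) (use that x_conv[OF that] in \<open>auto intro!: tendsto_Pair\<close>)
    then show ?thesis by simp
  qed
  show ?thesis
    using A_eq a_pos
  proof eventually_elim
    case (elim t)
    show ?case
    proof
      assume t: "t \<in> {0..T}"
      have "a t (X t) \<noteq> 0"
        using elim t by (metis less_irrefl)
      then have "(\<lambda>n. A n t / a t (x n t)) \<longlonglongrightarrow> A0 t / a t (X t)"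
        using t by (intro tendsto_divide A_conv a_conv)
      moreover have "A n t / a t (x n t) = x' n t" for n
        using elim t by (metis less_irrefl nonzero_mult_div_cancel_left)
      ultimately show "(\<lambda>n. x' n t) \<longlonglongrightarrow> A0 t / a t (X t)" by simp
    qed
  qed
qed

lemma is_A_of_pointwise_limit:
  fixes x x' A :: "nat \<Rightarrow> real \<Rightarrow> real"
  assumes a: "continuous_on ({0..T} \<times> UNIV) (\<lambda>(t, y). a t y)"
    and a_pos: "AE t\<in>{0..T} in lborel. \<forall>y. a t y > 0"
    and W: "\<And>n. W11_with_deriv T (x n) (x' n)"
    and A: "\<And>n. is_A_of T a (x n) (x' n) (A n)"
    and x_conv: "\<And>t. t \<in> {0..T} \<Longrightarrow> (\<lambda>n. x n t) \<longlonglongrightarrow> X t"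
    and A_conv: "\<And>t. t \<in> {0..T} \<Longrightarrow> (\<lambda>n. A n t) \<longlonglongrightarrow> A0 t"
    and A0: "continuous_on {0..T} A0"
    and \<gamma>: "set_integrable lborel {0..T} \<gamma>" "\<And>n. AE t\<in>{0..T} in lborel. \<bar>x' n t\<bar> \<le> \<gamma> t"
  obtains x0' where "W11_with_deriv T X x0'" "is_A_of T a X x0' A0"
    "AE t\<in>{0..T} in lborel. (\<lambda>n. x' n t) \<longlonglongrightarrow> x0' t"
    "AE t\<in>{0..T} in lborel. \<bar>x0' t\<bar> \<le> \<gamma> t"
proof -
  define x0' where "x0' t = lim (\<lambda>n. x' n t)" for t
  have x'_conv: "AE t\<in>{0..T} in lborel. (\<lambda>n. x' n t) \<longlonglongrightarrow> A0 t / a t (X t)"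
    by (rule is_A_of_deriv_tendsto[OF a a_pos A x_conv A_conv])
  then have x0'_eq: "AE t\<in>{0..T} in lborel. x0' t = A0 t / a t (X t)"
    by (auto simp: x0'_def limI elim!: eventually_mono)
  have x'_conv': "AE t\<in>{0..T} in lborel. (\<lambda>n. x' n t) \<longlonglongrightarrow> x0' t"
    using x'_conv x0'_eq by eventually_elim simp
  have "W11_with_deriv T X x0'"
    unfolding x0'_def using x'_conv'
    by (intro W11_with_deriv_limit[OF W x_conv _ \<gamma>]) (auto simp: convergent_def elim!: eventually_mono)
  moreover have "AE t\<in>{0..T} in lborel. A0 t = a t (X t) * x0' t"
    using x0'_eq a_pos
  proof eventually_elim
    case (elim t)
    show ?case
    proof
      assume t: "t \<in> {0..T}"
      then have "a t (X t) \<noteq> 0" using elim by (metis less_irrefl)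
      then show "A0 t = a t (X t) * x0' t" using elim t by simp
    qed
  qed
  then have "is_A_of T a X x0' A0"
    unfolding is_A_of_def using A0 by simp
  ultimately show thesis
    using that x'_conv' AE_tendsto_abs_le[OF x'_conv' \<gamma>(2)] by blast
qed

lemma solution_pointwise_limit:
  fixes x x' A :: "nat \<Rightarrow> real \<Rightarrow> real"
  assumes T: "T > 0" and \<Phi>: "continuous_on UNIV \<Phi>"
    and a: "continuous_on ({0..T} \<times> UNIV) (\<lambda>(t, y). a t y)"
    and a_pos: "AE t\<in>{0..T} in lborel. \<forall>y. a t y > 0"
    and f: "caratheodory T f"
    and sol: "\<And>n. is_solution T \<Phi> a f (x n) (x' n)"
    and A: "\<And>n. is_A_of T a (x n) (x' n) (A n)"
    and x_conv: "\<And>t. t \<in> {0..T} \<Longrightarrow> (\<lambda>n. x n t) \<longlonglongrightarrow> X t"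
    and A_conv: "\<And>t. t \<in> {0..T} \<Longrightarrow> (\<lambda>n. A n t) \<longlonglongrightarrow> A0 t"
    and A0: "continuous_on {0..T} A0"
    and \<gamma>: "set_integrable lborel {0..T} \<gamma>" "\<And>n. AE t\<in>{0..T} in lborel. \<bar>x' n t\<bar> \<le> \<gamma> t"
    and w: "set_integrable lborel {0..T} w"
      "\<And>n. AE t\<in>{0..T} in lborel. \<bar>f t (x n t) (x' n t)\<bar> \<le> w t"
  obtains x0' where "is_solution T \<Phi> a f X x0'" "is_A_of T a X x0' A0"
    "AE t\<in>{0..T} in lborel. \<bar>x0' t\<bar> \<le> \<gamma> t"
proof -
  have W: "W11_with_deriv T (x n) (x' n)" for n
    using sol[of n] unfolding is_solution_def by blast
  obtain x0' where W_X: "W11_with_deriv T X x0'" and A_X: "is_A_of T a X x0' A0"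
    and x'_conv: "AE t\<in>{0..T} in lborel. (\<lambda>n. x' n t) \<longlonglongrightarrow> x0' t"
    and x0'_bd: "AE t\<in>{0..T} in lborel. \<bar>x0' t\<bar> \<le> \<gamma> t"
    by (rule is_A_of_pointwise_limit[OF a a_pos W A x_conv A_conv A0 \<gamma>])
  have "\<exists>u'. W11_with_deriv T (\<lambda>t. \<Phi> (A n t)) u' \<and> (AE t\<in>{0..T} in lborel. u' t = f t (x n t) (x' n t))"
    for n using solution_flux_W11[OF sol A \<Phi> T] by metis
  then obtain u' where u': "\<And>n. W11_with_deriv T (\<lambda>t. \<Phi> (A n t)) (u' n)"
    and u'_eq: "\<And>n. AE t\<in>{0..T} in lborel. u' n t = f t (x n t) (x' n t)"
    by metis
  have "AE t in lborel. \<forall>n. t \<in> {0..T} \<longrightarrow> u' n t = f t (x n t) (x' n t)"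
    by (subst AE_all_countable) (use u'_eq in blast)
  moreover have "AE t\<in>{0..T} in lborel. (\<lambda>n. f t (x n t) (x' n t)) \<longlonglongrightarrow> f t (X t) (x0' t)"
    by (rule caratheodory_tendsto[OF f]) (use x_conv x'_conv in auto)
  ultimately have u'_conv: "AE t\<in>{0..T} in lborel. (\<lambda>n. u' n t) \<longlonglongrightarrow> f t (X t) (x0' t)"
    by eventually_elim simp
  have "W11_with_deriv T (\<lambda>t. \<Phi> (A0 t)) (\<lambda>t. lim (\<lambda>n. u' n t))"
  proof (rule W11_with_deriv_limit[OF u' _ _ w(1)])
    show "(\<lambda>n. \<Phi> (A n t)) \<longlonglongrightarrow> \<Phi> (A0 t)" if "t \<in> {0..T}" for t
      using continuous_on_tendsto_compose[OF \<Phi> A_conv[OF that]] by simp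
    show "AE t\<in>{0..T} in lborel. convergent (\<lambda>n. u' n t)"
      using u'_conv by (auto simp: convergent_def elim!: eventually_mono)
    show "AE t\<in>{0..T} in lborel. \<bar>u' n t\<bar> \<le> w t" for n
      using u'_eq[of n] w(2)[of n] by eventually_elim simp
  qed
  moreover have "AE t\<in>{0..T} in lborel. \<Phi> (A0 t) = \<Phi> (a t (X t) * x0' t)"
    using A_X unfolding is_A_of_def by (auto elim!: eventually_mono)
  moreover have "AE t\<in>{0..T} in lborel. lim (\<lambda>n. u' n t) = f t (X t) (x0' t)"
    using u'_conv by (auto simp: limI elim!: eventually_mono)
  ultimately have "is_solution T \<Phi> a f X x0'"
    unfolding is_solution_def using W_X by blast
  then show thesis using that A_X x0'_bd by blast
qed

lemma solutions_pointwise_convergent_subseq: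
  fixes x x' A :: "nat \<Rightarrow> real \<Rightarrow> real"
  assumes T: "T > 0" and hom: "homeomorphism UNIV UNIV \<Phi> \<Psi>"
    and sol: "\<And>n. is_solution T \<Phi> a f (x n) (x' n)"
    and A: "\<And>n. is_A_of T a (x n) (x' n) (A n)"
    and x_bd: "\<And>n t. t \<in> {0..T} \<Longrightarrow> \<bar>x n t\<bar> \<le> M"
    and A_bd: "\<And>n t. t \<in> {0..T} \<Longrightarrow> \<bar>A n t\<bar> \<le> L"
    and \<gamma>: "set_integrable lborel {0..T} \<gamma>" "\<And>n. AE t\<in>{0..T} in lborel. \<bar>x' n t\<bar> \<le> \<gamma> t"
    and w: "set_integrable lborel {0..T} w"
      "\<And>n. AE t\<in>{0..T} in lborel. \<bar>f t (x n t) (x' n t)\<bar> \<le> w t"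
  obtains r A0 X where "strict_mono r" "continuous_on {0..T} A0"
    "\<And>t. t \<in> {0..T} \<Longrightarrow> (\<lambda>k. x (r k) t) \<longlonglongrightarrow> X t"
    "\<And>t. t \<in> {0..T} \<Longrightarrow> (\<lambda>k. A (r k) t) \<longlonglongrightarrow> A0 t"
proof -
  have \<Phi>: "continuous_on UNIV \<Phi>" and \<Psi>: "continuous_on UNIV \<Psi>" and \<Psi>_\<Phi>: "\<And>v. \<Psi> (\<Phi> v) = v"
    using hom unfolding homeomorphism_def by auto
  have "\<exists>u'. W11_with_deriv T (\<lambda>t. \<Phi> (A n t)) u' \<and> (AE t\<in>{0..T} in lborel. \<bar>u' t\<bar> \<le> w t)" for n
  proof -
    obtain u' where W: "W11_with_deriv T (\<lambda>t. \<Phi> (A n t)) u'"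
      and u'_eq: "AE t\<in>{0..T} in lborel. u' t = f t (x n t) (x' n t)"
      by (rule solution_flux_W11[OF sol A \<Phi> T])
    have "AE t\<in>{0..T} in lborel. \<bar>u' t\<bar> \<le> w t"
      using u'_eq w(2)[of n] by eventually_elim simp
    with W show ?thesis by blast
  qed
  then obtain u' where u': "\<And>n. W11_with_deriv T (\<lambda>t. \<Phi> (A n t)) (u' n)"
    and u'_bd: "\<And>n. AE t\<in>{0..T} in lborel. \<bar>u' n t\<bar> \<le> w t"
    by metis
  have "bounded (\<Phi> ` {-L..L})"
    by (intro compact_imp_bounded compact_continuous_image continuous_on_subset[OF \<Phi>]) auto
  then obtain B where B: "\<forall>v\<in>{-L..L}. \<bar>\<Phi> v\<bar> \<le> B"
    unfolding bounded_iff by auto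
  have \<Phi>_A_bd: "\<bar>\<Phi> (A n t)\<bar> \<le> B" if "t \<in> {0..T}" for n t
    using A_bd[OF that, of n] B by (simp add: abs_le_iff)
  obtain r1 V where r1: "strict_mono r1" and V: "continuous_on {0..T} V"
    and V_conv: "\<And>t. t \<in> {0..T} \<Longrightarrow> (\<lambda>k. \<Phi> (A (r1 k) t)) \<longlonglongrightarrow> V t"
    by (rule W11_with_deriv_pointwise_convergent_subseq[where y = "\<lambda>n t. \<Phi> (A n t)" and y' = u' and B = B])
       (use u' w(1) u'_bd \<Phi>_A_bd in auto)
  obtain r2 X where r2: "strict_mono r2"
    and X_conv: "\<And>t. t \<in> {0..T} \<Longrightarrow> (\<lambda>k. x (r1 (r2 k)) t) \<longlonglongrightarrow> X t"
    by (rule W11_with_deriv_pointwise_convergent_subseq[of T "\<lambda>n. x (r1 n)" "\<lambda>n. x' (r1 n)" M \<gamma>])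
       (use sol x_bd \<gamma> in \<open>auto simp: is_solution_def\<close>)
  show thesis
  proof (rule that[of "r1 \<circ> r2" "\<lambda>t. \<Psi> (V t)" X])
    show "strict_mono (r1 \<circ> r2)" using r1 r2 by (rule strict_mono_o)
    show "continuous_on {0..T} (\<lambda>t. \<Psi> (V t))"
      by (rule continuous_on_compose2[OF \<Psi> V]) simp
    show "(\<lambda>k. x ((r1 \<circ> r2) k) t) \<longlonglongrightarrow> X t" if "t \<in> {0..T}" for t
      using X_conv[OF that] by simp
    show "(\<lambda>k. A ((r1 \<circ> r2) k) t) \<longlonglongrightarrow> \<Psi> (V t)" if "t \<in> {0..T}" for t
      using continuous_on_tendsto_compose[OF \<Psi> LIMSEQ_subseq_LIMSEQ[OF V_conv[OF that] r2]]
      by (simp add: \<Psi>_\<Phi> o_def)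
  qed
qed

theorem proposition4p2:
  fixes T p M L :: real
    and \<Phi> :: "real \<Rightarrow> real"
    and a :: "real \<Rightarrow> real \<Rightarrow> real"
    and h :: "real \<Rightarrow> real"
    and f :: "real \<Rightarrow> real \<Rightarrow> real \<Rightarrow> real"
    and x x' A :: "nat \<Rightarrow> real \<Rightarrow> real"
  assumes T_pos: "T > 0"
    and p_gt: "p > 1"
    and Phi_mono: "strict_mono \<Phi>"
    and Phi_homeo: "\<exists>\<Psi>. homeomorphism UNIV UNIV \<Phi> \<Psi>"
    and a_cont: "continuous_on ({0..T} \<times> UNIV) (\<lambda>(t, y). a t y)"
    and a_ge: "\<And>t y. t \<in> {0..T} \<Longrightarrow> a t y \<ge> h t"
    and h_cont: "continuous_on {0..T} h"
    and h_nonneg: "\<And>t. t \<in> {0..T} \<Longrightarrow> h t \<ge> 0"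
    and h_nonzero: "AE t in lborel. t \<in> {0..T} \<longrightarrow> h t \<noteq> 0"
    and inv_h_Lp: "Lp_on T p (\<lambda>t. 1 / h t)"
    and f_car: "caratheodory T f"
    and f_bound: "\<And>R \<gamma>. R > 0 \<Longrightarrow> Lp_on T p \<gamma> \<Longrightarrow> (\<forall>t\<in>{0..T}. \<gamma> t \<ge> 0) \<Longrightarrow>
        \<exists>hR. Lp_on T p hR \<and> (\<forall>t\<in>{0..T}. hR t \<ge> 0) \<and>
          (\<forall>y. Lp_on T p y \<and> (AE t in lborel. t \<in> {0..T} \<longrightarrow> \<bar>y t\<bar> \<le> \<gamma> t) \<longrightarrow>
             (AE t in lborel. t \<in> {0..T} \<longrightarrow>
                (\<forall>z. \<bar>z\<bar> \<le> R \<longrightarrow> \<bar>f t z (y t)\<bar> \<le> hR t)))"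
    and sol: "\<And>n. is_solution T \<Phi> a f (x n) (x' n)"
    and W1p: "\<And>n. Lp_on T p (x' n)"
    and A_def: "\<And>n. is_A_of T a (x n) (x' n) (A n)"
    and M_pos: "M > 0" and L_pos: "L > 0"
    and x_bd: "\<And>n t. t \<in> {0..T} \<Longrightarrow> \<bar>x n t\<bar> \<le> M"
    and A_bd: "\<And>n t. t \<in> {0..T} \<Longrightarrow> \<bar>A n t\<bar> \<le> L"
  shows "\<exists>r x0 x0' A0. strict_mono r
     \<and> is_solution T \<Phi> a f x0 x0' \<and> Lp_on T p x0' \<and> is_A_of T a x0 x0' A0
     \<and> (\<forall>t\<in>{0..T}. (\<lambda>k. x (r k) t) \<longlonglongrightarrow> x0 t)
     \<and> (\<forall>t\<in>{0..T}. (\<lambda>k. A (r k) t) \<longlonglongrightarrow> A0 t)"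
proof -
  obtain \<Psi> where hom: "homeomorphism UNIV UNIV \<Phi> \<Psi>" using Phi_homeo by blast
  define \<gamma> where "\<gamma> t = L * (1 / h t)" for t
  have \<gamma>_Lp: "Lp_on T p \<gamma>" unfolding \<gamma>_def by (rule Lp_on_cmult[OF inv_h_Lp])
  have "\<forall>t\<in>{0..T}. \<gamma> t \<ge> 0" using L_pos h_nonneg by (simp add: \<gamma>_def)
  then obtain w where w_Lp: "Lp_on T p w" and f_dom: "\<forall>y. Lp_on T p y \<and> (AE t\<in>{0..T} in lborel. \<bar>y t\<bar> \<le> \<gamma> t) \<longrightarrow>
      (AE t\<in>{0..T} in lborel. \<forall>z. \<bar>z\<bar> \<le> M \<longrightarrow> \<bar>f t z (y t)\<bar> \<le> w t)"
    using f_bound[OF M_pos \<gamma>_Lp] by blast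
  have h_pos: "AE t\<in>{0..T} in lborel. h t > 0"
    using h_nonzero h_nonneg by (auto elim!: eventually_mono simp: order_less_le)
  have x'_bd: "AE t\<in>{0..T} in lborel. \<bar>x' n t\<bar> \<le> \<gamma> t" for n
    unfolding \<gamma>_def using A_def A_bd a_ge h_pos by (rule is_A_of_deriv_bound)
  have f_bd: "AE t\<in>{0..T} in lborel. \<bar>f t (x n t) (x' n t)\<bar> \<le> w t" for n
  proof -
    have "AE t\<in>{0..T} in lborel. \<forall>z. \<bar>z\<bar> \<le> M \<longrightarrow> \<bar>f t z (x' n t)\<bar> \<le> w t"
      by (rule f_dom[rule_format, OF conjI[OF W1p x'_bd]])
    then show ?thesis
      by (rule eventually_mono) (use x_bd in blast)
  qed
  have \<gamma>_int: "set_integrable lborel {0..T} \<gamma>" and w_int: "set_integrable lborel {0..T} w"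
    using Lp_on_set_integrable[OF \<gamma>_Lp] Lp_on_set_integrable[OF w_Lp] p_gt by simp_all
  obtain r X A0 where r: "strict_mono r" and A0: "continuous_on {0..T} A0"
    and X_conv: "\<And>t. t \<in> {0..T} \<Longrightarrow> (\<lambda>k. x (r k) t) \<longlonglongrightarrow> X t"
    and A0_conv: "\<And>t. t \<in> {0..T} \<Longrightarrow> (\<lambda>k. A (r k) t) \<longlonglongrightarrow> A0 t"
    by (rule solutions_pointwise_convergent_subseq[where x = x and x' = x' and A = A,
          OF T_pos hom sol A_def x_bd A_bd \<gamma>_int x'_bd w_int f_bd], assumption+) (rule that)
  have a_pos: "AE t\<in>{0..T} in lborel. \<forall>y. a t y > 0"
    using h_pos by (rule eventually_mono) (use a_ge in \<open>blast intro: less_le_trans\<close>)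
  obtain x0' where sol0: "is_solution T \<Phi> a f X x0'" and A_X: "is_A_of T a X x0' A0"
    and x0'_bd: "AE t\<in>{0..T} in lborel. \<bar>x0' t\<bar> \<le> \<gamma> t"
    by (rule solution_pointwise_limit[where x = "\<lambda>k. x (r k)" and x' = "\<lambda>k. x' (r k)" and A = "\<lambda>k. A (r k)",
          OF T_pos homeomorphism_cont1[OF hom] a_cont a_pos f_car sol A_def X_conv A0_conv A0
          \<gamma>_int x'_bd w_int f_bd])
  have "Lp_on T p x0'"
    using sol0 p_gt unfolding is_solution_def
    by (intro Lp_on_dominated[OF \<gamma>_Lp _ W11_with_deriv_set_borel_measurable x0'_bd]) auto
  then show ?thesis
    using r sol0 A_X X_conv A0_conv
    by (intro exI[of _ r] exI[of _ X] exI[of _ x0'] exI[of _ A0] conjI) auto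
qed

end
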